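(* Consider a single agent with finite action set $A$, $|A|=m$, and utility $U:A\to[0,1]$, who in each round plays an action maximizing $U(a)+P^t(a)$ for the principal's payment $P^t:A\to\mathbb{R}_+$. Consider the principal algorithm: in round 1 pay nothing and observe the agent's optimal action $a^*=\arg\max_aU(a)$, and set $\tilde U(a^* )=0$; then for each $a\in A\setminus\{a^*\}$, pay $0$ on all actions other than $a$ and pay $P(a)=0,\varepsilon,2\varepsilon,\dots$ on $a$ in successive rounds until the agent plays $a$, and if this happens at $P(a)=k\varepsilon$ set $\tilde U(a)=-k\varepsilon$; output $\tilde U$. This algorithm $\varepsilon$-learns the game with total payment $\sum_tP^t(a^t)$ at most $\Delta+m\varepsilon$, where $\Delta=\sum_{a\in A}(U(a^* )-U(a))$.
   Context: The principal $\varepsilon$-learns the game if its output $\tilde U$ satisfies $|U(a)+W-\tilde U(a)|\le\varepsilon$ for all $a\in A$ for some constant $W$. $a^t$ is the agent's action in round $t$, and the agent receives $P^t(a^t)$. *)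

theory Defs
  imports Complex_Main
begin

text \<open>Agent: in round t (0-based; round 0 is the paper's round 1), facing payment P,
  plays the action ag t P.  It is a best responder if the played action maximizes U + P
  (ties broken arbitrarily, possibly depending on the round).\<close>

definition best_responder :: "('a \<Rightarrow> real) \<Rightarrow> (nat \<Rightarrow> ('a \<Rightarrow> real) \<Rightarrow> 'a) \<Rightarrow> bool" where
  "best_responder U ag \<longleftrightarrow>
     (\<forall>t P. (\<forall>b. P b \<ge> 0) \<longrightarrow> (\<forall>b. U b + P b \<le> U (ag t P) + P (ag t P)))"

definition pay_on :: "'a \<Rightarrow> real \<Rightarrow> 'a \<Rightarrow> real" where
  "pay_on a c = (\<lambda>b. if b = a then c else 0)"

text \<open>Phases of the algorithm, starting at round t, for the remaining actions.
  Returns the transcript (list of (payment, played action) per round) and the estimates.\<close>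
fun phases :: "(nat \<Rightarrow> ('a \<Rightarrow> real) \<Rightarrow> 'a) \<Rightarrow> real \<Rightarrow> nat \<Rightarrow> 'a list
                 \<Rightarrow> (('a \<Rightarrow> real) \<times> 'a) list \<times> ('a \<Rightarrow> real)" where
  "phases ag eps t [] = ([], (\<lambda>_. 0))"
| "phases ag eps t (a # as) =
     (let k = (LEAST k::nat. ag (t + k) (pay_on a (real k * eps)) = a);
          tr = map (\<lambda>j. (pay_on a (real j * eps), ag (t + j) (pay_on a (real j * eps)))) [0..<Suc k];
          (tr', Ut) = phases ag eps (t + Suc k) as
      in (tr @ tr', Ut(a := - (real k * eps))))"

definition principal_alg :: "(nat \<Rightarrow> ('a \<Rightarrow> real) \<Rightarrow> 'a) \<Rightarrow> real \<Rightarrow> 'a list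
                 \<Rightarrow> (('a \<Rightarrow> real) \<times> 'a) list \<times> ('a \<Rightarrow> real)" where
  "principal_alg ag eps as =
     (let P0 = (\<lambda>_. 0::real); astar = ag 0 P0; (tr, Ut) = phases ag eps 1 as
      in ((P0, astar) # tr, Ut(astar := 0)))"

definition total_payment :: "(('a \<Rightarrow> real) \<times> 'a) list \<Rightarrow> real" where
  "total_payment tr = (\<Sum>(P, b) \<leftarrow> tr. P b)"

definition eps_learns :: "('a \<Rightarrow> real) \<Rightarrow> real \<Rightarrow> ('a \<Rightarrow> real) \<Rightarrow> bool" where
  "eps_learns U eps Ut \<longleftrightarrow> (\<exists>W. \<forall>a. \<bar>U a + W - Ut a\<bar> \<le> eps)"

end

theory Submission
  imports Defs
begin

text \<open>Paying c on a single action a, a best responder plays a as soon as c exceeds the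
  utility gap U(a*) - U(a), and does not play a while c is below it. So the first accepted
  price k\<epsilon> of the phase for a lies in [U(a*) - U(a), U(a*) - U(a) + \<epsilon>], which makes -k\<epsilon> an
  \<epsilon>-estimate of U(a) - U(a*); and a phase costs only its last, accepted round, i.e. k\<epsilon>.\<close>

lemma total_payment_Nil [simp]: "total_payment [] = 0"
  unfolding total_payment_def by simp

lemma total_payment_Cons [simp]: "total_payment ((P, b) # tr) = P b + total_payment tr"
  unfolding total_payment_def by simp

lemma total_payment_append [simp]:
  "total_payment (tr @ tr') = total_payment tr + total_payment tr'"
  unfolding total_payment_def by simp

lemma eps_learnsI:
  assumes "\<And>a. c - U a \<le> - Ut a" and "\<And>a. - Ut a \<le> c - U a + eps"
  shows "eps_learns U eps Ut"
  unfolding eps_learns_def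
proof (intro exI allI)
  fix a
  show "\<bar>U a + - c - Ut a\<bar> \<le> eps"
    using assms[of a] by (simp add: abs_le_iff)
qed

lemma best_responder_unpaid_maximizes:
  assumes "best_responder U ag"
  shows "U b \<le> U (ag t (\<lambda>_. 0))"
  using assms unfolding best_responder_def by (metis add.right_neutral order_refl)

lemma best_responder_pay_on:
  assumes "best_responder U ag" and "c \<ge> 0"
  shows "U b + pay_on a c b \<le> U (ag t (pay_on a c)) + pay_on a c (ag t (pay_on a c))"
proof -
  have "\<forall>b. pay_on a c b \<ge> 0"
    using assms(2) by (simp add: pay_on_def)
  then show ?thesis
    using assms(1) unfolding best_responder_def by blast
qed

lemma best_responder_pay_on_refused:
  assumes "best_responder U ag" and "c \<ge> 0" and "ag t (pay_on a c) \<noteq> a"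
  shows "U a + c \<le> U (ag t (pay_on a c))"
  using best_responder_pay_on[OF assms(1,2), of a a t] assms(3)
  by (simp add: pay_on_def)

lemma best_responder_pay_on_accepted:
  assumes "best_responder U ag" and "c \<ge> 0" and "ag t (pay_on a c) = a"
  shows "U b \<le> U a + c"
  using best_responder_pay_on[OF assms(1,2), of b a t] assms(2,3)
  by (cases "b = a") (simp_all add: pay_on_def)

definition phase_steps :: "(nat \<Rightarrow> ('a \<Rightarrow> real) \<Rightarrow> 'a) \<Rightarrow> real \<Rightarrow> nat \<Rightarrow> 'a \<Rightarrow> nat" where
  "phase_steps ag eps t a = (LEAST k. ag (t + k) (pay_on a (real k * eps)) = a)"

definition phase_transcript ::
    "(nat \<Rightarrow> ('a \<Rightarrow> real) \<Rightarrow> 'a) \<Rightarrow> real \<Rightarrow> nat \<Rightarrow> 'a \<Rightarrow> (('a \<Rightarrow> real) \<times> 'a) list" where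
  "phase_transcript ag eps t a =
     map (\<lambda>j. (pay_on a (real j * eps), ag (t + j) (pay_on a (real j * eps))))
       [0..<Suc (phase_steps ag eps t a)]"

lemma phases_Cons:
  "phases ag eps t (a # as) =
     (let k = phase_steps ag eps t a; rest = phases ag eps (t + Suc k) as
      in (phase_transcript ag eps t a @ fst rest, (snd rest)(a := - (real k * eps))))"
  unfolding phase_steps_def phase_transcript_def
  by (simp add: Let_def split: prod.split del: upt_Suc)

declare phases.simps(2) [simp del]

context
  fixes U :: "'a \<Rightarrow> real" and ag and eps :: real and astar :: 'a
  assumes agent: "best_responder U ag" and eps_pos: "eps > 0"
    and astar_max: "\<And>b. U b \<le> U astar"
begin

lemma phase_steps_accepted:
  "ag (t + phase_steps ag eps t a) (pay_on a (real (phase_steps ag eps t a) * eps)) = a"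
proof -
  obtain n :: nat where n: "real n * eps > U astar - U a"
    using reals_Archimedean3[OF eps_pos] by blast
  have "ag (t + n) (pay_on a (real n * eps)) = a"
  proof (rule ccontr)
    assume "ag (t + n) (pay_on a (real n * eps)) \<noteq> a"
    then have "U a + real n * eps \<le> U (ag (t + n) (pay_on a (real n * eps)))"
      using eps_pos by (intro best_responder_pay_on_refused[OF agent]) simp_all
    with astar_max[of "ag (t + n) (pay_on a (real n * eps))"] n show False by linarith
  qed
  then show ?thesis
    unfolding phase_steps_def by (rule LeastI)
qed

lemma phase_steps_lower: "U astar - U a \<le> real (phase_steps ag eps t a) * eps"
  using best_responder_pay_on_accepted[OF agent _ phase_steps_accepted[of t a], where b = astar]
    eps_pos by simp

lemma phase_refuses_before_steps:
  "j < phase_steps ag eps t a \<Longrightarrow> ag (t + j) (pay_on a (real j * eps)) \<noteq> a"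
  unfolding phase_steps_def by (rule not_less_Least)

lemma phase_steps_upper: "real (phase_steps ag eps t a) * eps \<le> U astar - U a + eps"
proof (cases "phase_steps ag eps t a")
  case 0
  then show ?thesis using astar_max[of a] eps_pos by simp
next
  case (Suc j)
  then have "U a + real j * eps \<le> U (ag (t + j) (pay_on a (real j * eps)))"
    using best_responder_pay_on_refused[OF agent] phase_refuses_before_steps eps_pos by simp
  with astar_max[of "ag (t + j) (pay_on a (real j * eps))"] Suc show ?thesis
    by (simp add: algebra_simps)
qed

lemma total_payment_phase_transcript:
  "total_payment (phase_transcript ag eps t a) = real (phase_steps ag eps t a) * eps"
proof -
  define k where "k = phase_steps ag eps t a"
  let ?paid = "\<lambda>j. pay_on a (real j * eps) (ag (t + j) (pay_on a (real j * eps)))"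
  have "total_payment (phase_transcript ag eps t a) = (\<Sum>j<Suc k. ?paid j)"
    unfolding total_payment_def phase_transcript_def k_def[symmetric]
    by (simp add: o_def sum_list_sum_nth atLeast0LessThan del: upt_Suc)
  also have "\<dots> = (\<Sum>j<k. ?paid j) + ?paid k" by simp
  also have "(\<Sum>j<k. ?paid j) = 0"
    using phase_refuses_before_steps unfolding k_def by (intro sum.neutral) (simp add: pay_on_def)
  also have "?paid k = real k * eps"
    using phase_steps_accepted unfolding k_def by (simp add: pay_on_def)
  finally show ?thesis unfolding k_def by simp
qed

lemma phases_estimate:
  "a \<in> set as \<Longrightarrow> U astar - U a \<le> - snd (phases ag eps t as) a
     \<and> - snd (phases ag eps t as) a \<le> U astar - U a + eps"
proof (induction as arbitrary: t)
  case (Cons b as)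
  then show ?case
    using phase_steps_lower phase_steps_upper by (auto simp: phases_Cons Let_def)
qed simp

lemma total_payment_phases:
  "total_payment (fst (phases ag eps t as)) \<le> (\<Sum>a\<leftarrow>as. U astar - U a + eps)"
proof (induction as arbitrary: t)
  case (Cons b as)
  have "total_payment (fst (phases ag eps (t + Suc (phase_steps ag eps t b)) as))
      \<le> (\<Sum>a\<leftarrow>as. U astar - U a + eps)"
    by (rule Cons.IH)
  then show ?case
    using phase_steps_upper[of t b]
    by (simp add: phases_Cons Let_def total_payment_phase_transcript)
qed simp

end

lemma principal_alg_eq:
  "principal_alg ag eps as =
     ((\<lambda>_. 0, ag 0 (\<lambda>_. 0)) # fst (phases ag eps 1 as), (snd (phases ag eps 1 as))(ag 0 (\<lambda>_. 0) := 0))"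
  unfolding principal_alg_def by (simp add: Let_def split: prod.split)

theorem proposition6p1:
  fixes U :: "'a::finite \<Rightarrow> real"
    and ag :: "nat \<Rightarrow> ('a \<Rightarrow> real) \<Rightarrow> 'a"
    and eps :: real
    and as :: "'a list"
  assumes U_range: "\<And>a. 0 \<le> U a \<and> U a \<le> 1"
    and agent: "best_responder U ag"
    and eps_pos: "eps > 0"
    and order: "distinct as" "set as = UNIV - {ag 0 (\<lambda>_. 0)}"
  shows "eps_learns U eps (snd (principal_alg ag eps as)) \<and>
         total_payment (fst (principal_alg ag eps as))
           \<le> (\<Sum>a\<in>UNIV. U (ag 0 (\<lambda>_. 0)) - U a) + real (card (UNIV :: 'a set)) * eps"
proof -
  define astar where "astar = ag 0 (\<lambda>_. 0)"
  have astar_max: "\<And>b. U b \<le> U astar"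
    unfolding astar_def using agent by (rule best_responder_unpaid_maximizes)
  note estimate = phases_estimate[OF agent eps_pos astar_max]
  have "eps_learns U eps ((snd (phases ag eps 1 as))(astar := 0))"
    by (rule eps_learnsI[where c = "U astar"])
       (use estimate eps_pos order(2) astar_def in \<open>auto simp: less_imp_le\<close>)
  moreover have "(\<Sum>a\<leftarrow>as. U astar - U a + eps) = (\<Sum>a\<in>UNIV - {astar}. U astar - U a + eps)"
    using order astar_def by (simp add: sum_list_distinct_conv_sum_set)
  moreover have "\<dots> \<le> (\<Sum>a\<in>UNIV. U astar - U a + eps)"
    using astar_max eps_pos by (intro sum_mono2) (auto intro: add_nonneg_pos less_imp_le)
  ultimately show ?thesis
    using total_payment_phases[OF agent eps_pos astar_max, of 1 as]
    by (simp add: principal_alg_eq astar_def[symmetric] sum.distrib)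
qed

end
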